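(* For every $n \in \mathbb{N}$, the $n^\text{th}$ Jones--Wenzl projector $\mathrm{j}_n \in \mathrm{End}_{\mathcal{TL}_0(\Bbbk)}([n])$ is idempotent: $\mathrm{j}_n^{2} = \mathrm{j}_n$.
   Context: Let $\Bbbk$ be a field and let $\mathcal{TL}_0(\Bbbk)$ be the strict $\Bbbk$-linear monoidal category with objects $[0],[1],[2],\ldots$ (where $[m]\otimes[n]=[m+n]$), whose morphisms are generated by $\mathrm{cup}\colon[0]\to[2]$ and $\mathrm{cap}\colon[2]\to[0]$ subject to the relations: the circle $\mathrm{cap}\circ\mathrm{cup}$ equals $\mathrm{id}_{[0]}$, and both zig-zags $(\mathrm{id}_{[1]}\otimes\mathrm{cap})\circ(\mathrm{cup}\otimes\mathrm{id}_{[1]})$ and $(\mathrm{cap}\otimes\mathrm{id}_{[1]})\circ(\mathrm{id}_{[1]}\otimes\mathrm{cup})$ equal $0$ (this is the $q=0$ specialization of the renormalized Temperley--Lieb category in which the zig-zag equals $q\cdot\mathrm{id}_{[1]}$ and the circle equals $(q^2+1)\mathrm{id}_{[0]}$). A subset $I\subseteq\{1,\ldots,n\}$ is called apt if $n\notin I$ and $i\in I$ implies $i-1,i+1\notin I$. For an apt $I$, $\mathrm{cap}_{I,n}$ denotes the cap diagram from $[n]$ consisting of caps joining positions $(i,i+1)$ for $i\in I$ (and through-strands elsewhere), $\mathrm{cup}_{I,n}$ is the corresponding cup diagram obtained by reflecting it, and $c_{I,n}=\mathrm{cup}_{I,n}\circ\mathrm{cap}_{I,n}\in\mathrm{End}_{\mathcal{TL}_0(\Bbbk)}([n])$.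 The $n^\text{th}$ Jones--Wenzl projector is defined as $\mathrm{j}_n=\sum_{I\subseteq\{1,\ldots,n\}\text{ apt}}(-1)^{|I|}c_{I,n}$. *)

theory Defs
  imports Main
begin

text \<open>Morphisms of the free strict monoidal category on the generators cup : [0] -> [2]
  and cap : [2] -> [0] are represented by (well-typed) terms modulo the strict
  monoidal category axioms; the k-linear category is the k-span of such terms
  (finitely supported functions tm => k) modulo the linear monoidal ideal
  generated by the category axioms and the defining relations of TL_0.\<close>

datatype tm = Idt nat | Cup | Cap | Cmp tm tm | Tns tm tm
  \<comment> \<open>Cmp a b is the composite a \<circ> b (first b, then a); Tns a b is a \<otimes> b.\<close>

fun src :: "tm \<Rightarrow> nat" and tgt :: "tm \<Rightarrow> nat" where
  "src (Idt n) = n" | "tgt (Idt n) = n"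
| "src Cup = 0" | "tgt Cup = 2"
| "src Cap = 2" | "tgt Cap = 0"
| "src (Cmp a b) = src b" | "tgt (Cmp a b) = tgt a"
| "src (Tns a b) = src a + src b" | "tgt (Tns a b) = tgt a + tgt b"

fun wt :: "tm \<Rightarrow> bool" where
  "wt (Idt n) = True"
| "wt Cup = True"
| "wt Cap = True"
| "wt (Cmp a b) = (wt a \<and> wt b \<and> src a = tgt b)"
| "wt (Tns a b) = (wt a \<and> wt b)"

inductive ax_eq :: "tm \<Rightarrow> tm \<Rightarrow> bool" where
  cmp_assoc: "ax_eq (Cmp (Cmp a b) c) (Cmp a (Cmp b c))"
| cmp_idl: "ax_eq (Cmp (Idt (tgt a)) a) a"
| cmp_idr: "ax_eq (Cmp a (Idt (src a))) a"
| tns_assoc: "ax_eq (Tns (Tns a b) c) (Tns a (Tns b c))"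
| tns_unitl: "ax_eq (Tns (Idt 0) a) a"
| tns_unitr: "ax_eq (Tns a (Idt 0)) a"
| tns_id: "ax_eq (Tns (Idt m) (Idt n)) (Idt (m + n))"
| interchange: "ax_eq (Cmp (Tns a b) (Tns c d)) (Tns (Cmp a c) (Cmp b d))"

definition basis :: "tm \<Rightarrow> tm \<Rightarrow> 'k::field" where
  "basis t = (\<lambda>u. if u = t then 1 else 0)"

text \<open>Bilinear extension of composition and tensor product.\<close>
definition lcomp :: "(tm \<Rightarrow> 'k::field) \<Rightarrow> (tm \<Rightarrow> 'k) \<Rightarrow> tm \<Rightarrow> 'k" where
  "lcomp f g = (\<lambda>u. case u of Cmp a b \<Rightarrow> f a * g b | _ \<Rightarrow> 0)"

definition ltns :: "(tm \<Rightarrow> 'k::field) \<Rightarrow> (tm \<Rightarrow> 'k) \<Rightarrow> tm \<Rightarrow> 'k" where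
  "ltns f g = (\<lambda>u. case u of Tns a b \<Rightarrow> f a * g b | _ \<Rightarrow> 0)"

text \<open>The defining relations of TL_0: circle = id_[0], both zig-zags = 0.\<close>
definition circle :: tm where "circle = Cmp Cap Cup"
definition zigzag1 :: tm where "zigzag1 = Cmp (Tns (Idt 1) Cap) (Tns Cup (Idt 1))"
definition zigzag2 :: tm where "zigzag2 = Cmp (Tns Cap (Idt 1)) (Tns (Idt 1) Cup)"

text \<open>tl0_null m n r: r is a linear combination of terms [m] -> [n] lying in the
  linear monoidal ideal of relations, i.e. r = 0 in Hom_{TL_0(k)}([m],[n]).\<close>
inductive tl0_null :: "nat \<Rightarrow> nat \<Rightarrow> (tm \<Rightarrow> 'k::field) \<Rightarrow> bool" where
  zero: "tl0_null m n (\<lambda>_. 0)"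
| ax: "\<lbrakk>ax_eq x y; wt x; wt y; src x = m; tgt x = n; src y = m; tgt y = n\<rbrakk>
        \<Longrightarrow> tl0_null m n (\<lambda>u. basis x u - basis y u)"
| rel_circle: "tl0_null 0 0 (\<lambda>u. basis circle u - basis (Idt 0) u)"
| rel_zigzag1: "tl0_null 1 1 (basis zigzag1)"
| rel_zigzag2: "tl0_null 1 1 (basis zigzag2)"
| add: "\<lbrakk>tl0_null m n r; tl0_null m n s\<rbrakk> \<Longrightarrow> tl0_null m n (\<lambda>u. r u + s u)"
| smult: "tl0_null m n r \<Longrightarrow> tl0_null m n (\<lambda>u. c * r u)"
| comp_left: "\<lbrakk>tl0_null m n r; wt t; src t = n\<rbrakk> \<Longrightarrow> tl0_null m (tgt t) (lcomp (basis t) r)"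
| comp_right: "\<lbrakk>tl0_null m n r; wt t; tgt t = m\<rbrakk> \<Longrightarrow> tl0_null (src t) n (lcomp r (basis t))"
| tns_left: "\<lbrakk>tl0_null m n r; wt t\<rbrakk> \<Longrightarrow> tl0_null (src t + m) (tgt t + n) (ltns (basis t) r)"
| tns_right: "\<lbrakk>tl0_null m n r; wt t\<rbrakk> \<Longrightarrow> tl0_null (m + src t) (n + tgt t) (ltns r (basis t))"

definition tl0_eq :: "nat \<Rightarrow> nat \<Rightarrow> (tm \<Rightarrow> 'k::field) \<Rightarrow> (tm \<Rightarrow> 'k) \<Rightarrow> bool" where
  "tl0_eq m n f g \<longleftrightarrow> tl0_null m n (\<lambda>u. f u - g u)"

definition apt :: "nat \<Rightarrow> nat set \<Rightarrow> bool" where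
  "apt n I \<longleftrightarrow> I \<subseteq> {1..n} \<and> n \<notin> I \<and> (\<forall>i\<in>I. i - 1 \<notin> I \<and> i + 1 \<notin> I)"

text \<open>cap_{I,n} restricted to positions i..n (caps at (j,j+1) for j in I,
  through-strands elsewhere), and the reflected cup diagram.\<close>
function cap_from :: "nat set \<Rightarrow> nat \<Rightarrow> nat \<Rightarrow> tm" where
  "cap_from I n i = (if n < i then Idt 0
     else if i \<in> I then Tns Cap (cap_from I n (i + 2))
     else Tns (Idt 1) (cap_from I n (i + 1)))"
  by pat_completeness auto
termination by (relation "measure (\<lambda>(I, n, i). Suc n - i)") auto

function cup_from :: "nat set \<Rightarrow> nat \<Rightarrow> nat \<Rightarrow> tm" where
  "cup_from I n i = (if n < i then Idt 0
     else if i \<in> I then Tns Cup (cup_from I n (i + 2))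
     else Tns (Idt 1) (cup_from I n (i + 1)))"
  by pat_completeness auto
termination by (relation "measure (\<lambda>(I, n, i). Suc n - i)") auto

definition cap_I :: "nat set \<Rightarrow> nat \<Rightarrow> tm" where "cap_I I n = cap_from I n 1"
definition cup_I :: "nat set \<Rightarrow> nat \<Rightarrow> tm" where "cup_I I n = cup_from I n 1"
definition c_I :: "nat set \<Rightarrow> nat \<Rightarrow> tm" where "c_I I n = Cmp (cup_I I n) (cap_I I n)"

definition jw :: "nat \<Rightarrow> tm \<Rightarrow> 'k::field" where
  "jw n = (\<lambda>u. \<Sum>I\<in>{I. apt n I}. (-1) ^ card I * basis (c_I I n) u)"

end

theory Submission
  imports Defs
begin

(* Compute c_I c_J strand by strand from the left. If I and J have caps at adjacent positions
   j and j + 1, these form a zig-zag and c_I c_J = 0; otherwise every position carries a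
   through-strand or a cup-cap pair (two coinciding caps enclose a circle, which evaluates to 1),
   and c_I c_J = c_(I \<union> J). The first case occurs exactly when I \<union> J is not apt. Hence
   j_n^2 is the sum of (-1)^(|I| + |J|) c_(I \<union> J) over apt I, J with I \<union> J apt. For
   I \<noteq> {} fix x \<in> I: the terms for J - {x} and J \<union> {x} cancel, so only I = {}
   survives, and it contributes j_n. *)

declare cap_from.simps[simp del] cup_from.simps[simp del]

lemma cap_from_beyond: "n < i \<Longrightarrow> cap_from I n i = Idt 0"
  by (simp add: cap_from.simps)

lemma cap_from_in: "i \<le> n \<Longrightarrow> i \<in> I \<Longrightarrow> cap_from I n i = Tns Cap (cap_from I n (i + 2))"
  by (subst cap_from.simps) simp

lemma cap_from_notin: "i \<le> n \<Longrightarrow> i \<notin> I \<Longrightarrow> cap_from I n i = Tns (Idt 1) (cap_from I n (i + 1))"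
  by (subst cap_from.simps) simp

lemma cup_from_beyond: "n < i \<Longrightarrow> cup_from I n i = Idt 0"
  by (simp add: cup_from.simps)

lemma cup_from_in: "i \<le> n \<Longrightarrow> i \<in> I \<Longrightarrow> cup_from I n i = Tns Cup (cup_from I n (i + 2))"
  by (subst cup_from.simps) simp

lemma cup_from_notin: "i \<le> n \<Longrightarrow> i \<notin> I \<Longrightarrow> cup_from I n i = Tns (Idt 1) (cup_from I n (i + 1))"
  by (subst cup_from.simps) simp

lemma wt_cap_from [simp]: "wt (cap_from I n i)"
  by (induction I n i rule: cap_from.induct) (subst cap_from.simps, auto)

lemma wt_cup_from [simp]: "wt (cup_from I n i)"
  by (induction I n i rule: cup_from.induct) (subst cup_from.simps, auto)

lemma src_cup_from [simp]: "src (cup_from I n i) = tgt (cap_from I n i)"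
  by (induction I n i rule: cap_from.induct) (subst cap_from.simps, subst cup_from.simps, auto)

lemma tgt_cup_from [simp]: "tgt (cup_from I n i) = src (cap_from I n i)"
  by (induction I n i rule: cap_from.induct) (subst cap_from.simps, subst cup_from.simps, auto)

lemma src_cap_from: "(\<And>j. j \<in> I \<Longrightarrow> j < n) \<Longrightarrow> src (cap_from I n i) = Suc n - i"
proof (induction I n i rule: cap_from.induct)
  case (1 I n i)
  then show ?case
    by (subst cap_from.simps) (auto simp: Suc_diff_Suc)
qed

lemma apt_iff: "apt n I \<longleftrightarrow> I \<subseteq> {1..<n} \<and> (\<forall>i\<in>I. Suc i \<notin> I)"
proof
  assume "apt n I"
  then show "I \<subseteq> {1..<n} \<and> (\<forall>i\<in>I. Suc i \<notin> I)"
    unfolding apt_def by (auto simp: subset_iff order.order_iff_strict)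
next
  assume *: "I \<subseteq> {1..<n} \<and> (\<forall>i\<in>I. Suc i \<notin> I)"
  have "i - 1 \<notin> I" if "i \<in> I" for i
    using * that by (cases i) auto
  with * show "apt n I"
    unfolding apt_def by auto
qed

lemma apt_empty: "apt n {}"
  by (simp add: apt_def)

lemma apt_less: "apt n I \<Longrightarrow> j \<in> I \<Longrightarrow> j < n"
  by (auto simp: apt_iff)

lemma apt_Suc_notin: "apt n I \<Longrightarrow> j \<in> I \<Longrightarrow> Suc j \<notin> I"
  by (auto simp: apt_iff)

lemma apt_pred_notin: "apt n I \<Longrightarrow> Suc j \<in> I \<Longrightarrow> j \<notin> I"
  by (auto simp: apt_iff)

lemma apt_subset: "apt n K \<Longrightarrow> L \<subseteq> K \<Longrightarrow> apt n L"
  unfolding apt_iff by blast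

lemma finite_apt: "finite {I. apt n I}"
  by (rule finite_subset[of _ "Pow {1..<n}"]) (auto simp: apt_iff)

lemma apt_finite: "apt n I \<Longrightarrow> finite I"
  unfolding apt_iff using finite_subset by blast

lemma src_cap_from_apt: "apt n I \<Longrightarrow> src (cap_from I n i) = Suc n - i"
  by (rule src_cap_from) (rule apt_less)

lemma lcomp_basis [simp]: "lcomp (basis a) (basis b) = (basis (Cmp a b) :: tm \<Rightarrow> 'k::field)"
  by (rule ext) (simp add: lcomp_def basis_def split: tm.split)

lemma ltns_basis [simp]: "ltns (basis a) (basis b) = (basis (Tns a b) :: tm \<Rightarrow> 'k::field)"
  by (rule ext) (simp add: ltns_def basis_def split: tm.split)

lemma lcomp_diff_left: "lcomp (\<lambda>u. f u - g u) h = (\<lambda>u. lcomp f h u - lcomp g h u :: 'k::field)"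
  by (rule ext) (simp add: lcomp_def algebra_simps split: tm.split)

lemma lcomp_diff_right: "lcomp h (\<lambda>u. f u - g u) = (\<lambda>u. lcomp h f u - lcomp h g u :: 'k::field)"
  by (rule ext) (simp add: lcomp_def algebra_simps split: tm.split)

lemma ltns_diff_left: "ltns (\<lambda>u. f u - g u) h = (\<lambda>u. ltns f h u - ltns g h u :: 'k::field)"
  by (rule ext) (simp add: ltns_def algebra_simps split: tm.split)

lemma ltns_diff_right: "ltns h (\<lambda>u. f u - g u) = (\<lambda>u. ltns h f u - ltns h g u :: 'k::field)"
  by (rule ext) (simp add: ltns_def algebra_simps split: tm.split)

lemma lcomp_sum_basis:
  "lcomp (\<lambda>u. \<Sum>I\<in>A. a I * basis (x I) u) (\<lambda>u. \<Sum>J\<in>B. b J * basis (y J) u)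
    = (\<lambda>u. \<Sum>I\<in>A. a I * (\<Sum>J\<in>B. b J * basis (Cmp (x I) (y J)) u) :: 'k::field)"
proof
  fix u
  show "lcomp (\<lambda>u. \<Sum>I\<in>A. a I * basis (x I) u) (\<lambda>u. \<Sum>J\<in>B. b J * basis (y J) u) u
    = (\<Sum>I\<in>A. a I * (\<Sum>J\<in>B. b J * basis (Cmp (x I) (y J)) u))"
  proof (cases u)
    case (Cmp p q)
    have "lcomp (\<lambda>u. \<Sum>I\<in>A. a I * basis (x I) u) (\<lambda>u. \<Sum>J\<in>B. b J * basis (y J) u) u
        = (\<Sum>I\<in>A. a I * basis (x I) p) * (\<Sum>J\<in>B. b J * basis (y J) q)"
      by (simp add: lcomp_def Cmp)
    also have "\<dots> = (\<Sum>I\<in>A. a I * (\<Sum>J\<in>B. b J * (basis (x I) p * basis (y J) q)))"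
      by (simp only: sum_product) (simp add: sum_distrib_left mult_ac)
    also have "\<dots> = (\<Sum>I\<in>A. a I * (\<Sum>J\<in>B. b J * basis (Cmp (x I) (y J)) u))"
      by (intro sum.cong refl arg_cong2[where f = "(*)"]) (simp add: basis_def Cmp)
    finally show ?thesis .
  qed (simp_all add: lcomp_def basis_def)
qed

lemma tl0_null_sum:
  "finite A \<Longrightarrow> (\<And>x. x \<in> A \<Longrightarrow> tl0_null m n (f x)) \<Longrightarrow> tl0_null m n (\<lambda>u. \<Sum>x\<in>A. f x u :: 'k::field)"
proof (induction A rule: finite_induct)
  case empty
  show ?case using tl0_null.zero by simp
next
  case (insert x A)
  then show ?case using tl0_null.add[of m n "f x" "\<lambda>u. \<Sum>x\<in>A. f x u"] by simp
qed

lemma tl0_eq_sum: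
  assumes "finite A" "\<And>x. x \<in> A \<Longrightarrow> tl0_eq m n (f x) (g x)"
  shows "tl0_eq m n (\<lambda>u. \<Sum>x\<in>A. c x * f x u) (\<lambda>u. \<Sum>x\<in>A. c x * g x u :: 'k::field)"
proof -
  have "tl0_null m n (\<lambda>u. \<Sum>x\<in>A. c x * (f x u - g x u))"
    using assms by (intro tl0_null_sum tl0_null.smult) (auto simp: tl0_eq_def)
  then show ?thesis
    unfolding tl0_eq_def by (simp add: right_diff_distrib sum_subtractf)
qed

text \<open>Equality and vanishing in TL_0(k) of single diagrams; the type argument only fixes the
  ground field k.\<close>

definition tm_equiv :: "'k::field itself \<Rightarrow> tm \<Rightarrow> tm \<Rightarrow> bool" where
  "tm_equiv _ a b \<longleftrightarrow> wt a \<and> wt b \<and> src a = src b \<and> tgt a = tgt b \<and>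
     tl0_eq (src a) (tgt a) (basis a :: tm \<Rightarrow> 'k) (basis b)"

definition tm_null :: "'k::field itself \<Rightarrow> tm \<Rightarrow> bool" where
  "tm_null _ a \<longleftrightarrow> wt a \<and> tl0_null (src a) (tgt a) (basis a :: tm \<Rightarrow> 'k)"

context
  fixes F :: "'k::field itself"
begin

abbreviation tm_equiv_F (infix "\<simeq>" 50) where "a \<simeq> b \<equiv> tm_equiv F a b"

lemma tm_equiv_refl: "wt a \<Longrightarrow> a \<simeq> a"
  unfolding tm_equiv_def tl0_eq_def by (simp add: tl0_null.zero)

lemma tm_equiv_sym: "a \<simeq> b \<Longrightarrow> b \<simeq> a"
  unfolding tm_equiv_def tl0_eq_def
  using tl0_null.smult[where c = "-1 :: 'k"] by (fastforce simp: algebra_simps)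

lemma tm_equiv_trans [trans]: "a \<simeq> b \<Longrightarrow> b \<simeq> c \<Longrightarrow> a \<simeq> c"
  unfolding tm_equiv_def tl0_eq_def
  using tl0_null.add[of _ _ "\<lambda>u. basis a u - basis b u :: 'k" "\<lambda>u. basis b u - basis c u"] by auto

lemma tm_equiv_Cmp:
  assumes "a \<simeq> a'" "b \<simeq> b'" "src a = tgt b"
  shows "Cmp a b \<simeq> Cmp a' b'"
proof -
  from assms have wt: "wt a" "wt a'" "wt b" "wt b'" "src a = src a'" "tgt a = tgt a'"
      "src b = src b'" "tgt b = tgt b'"
    and na: "tl0_null (src a) (tgt a) (\<lambda>u. basis a u - basis a' u :: 'k)"
    and nb: "tl0_null (src b) (tgt b) (\<lambda>u. basis b u - basis b' u :: 'k)"
    unfolding tm_equiv_def tl0_eq_def by auto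
  have "tl0_null (src b) (tgt a) (lcomp (basis a) (\<lambda>u. basis b u - basis b' u :: 'k))"
    using tl0_null.comp_left[OF nb wt(1)] assms(3) by simp
  moreover have "tl0_null (src b) (tgt a) (lcomp (\<lambda>u. basis a u - basis a' u :: 'k) (basis b'))"
    using tl0_null.comp_right[OF na wt(4)] assms(3) wt by simp
  ultimately have "tl0_null (src b) (tgt a)
      (\<lambda>u. (basis (Cmp a b) u - basis (Cmp a b') u) + (basis (Cmp a b') u - basis (Cmp a' b') u) :: 'k)"
    by (intro tl0_null.add) (simp_all add: lcomp_diff_left lcomp_diff_right)
  then show ?thesis
    using wt assms(3) by (simp add: tm_equiv_def tl0_eq_def)
qed

lemma tm_equiv_Tns:
  assumes "a \<simeq> a'" "b \<simeq> b'"
  shows "Tns a b \<simeq> Tns a' b'"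
proof -
  from assms have wt: "wt a" "wt a'" "wt b" "wt b'" "src a = src a'" "tgt a = tgt a'"
      "src b = src b'" "tgt b = tgt b'"
    and na: "tl0_null (src a) (tgt a) (\<lambda>u. basis a u - basis a' u :: 'k)"
    and nb: "tl0_null (src b) (tgt b) (\<lambda>u. basis b u - basis b' u :: 'k)"
    unfolding tm_equiv_def tl0_eq_def by auto
  have "tl0_null (src a + src b) (tgt a + tgt b) (ltns (basis a) (\<lambda>u. basis b u - basis b' u :: 'k))"
    using tl0_null.tns_left[OF nb wt(1)] by simp
  moreover have "tl0_null (src a + src b) (tgt a + tgt b) (ltns (\<lambda>u. basis a u - basis a' u :: 'k) (basis b'))"
    using tl0_null.tns_right[OF na wt(4)] wt by simp
  ultimately have "tl0_null (src a + src b) (tgt a + tgt b)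
      (\<lambda>u. (basis (Tns a b) u - basis (Tns a b') u) + (basis (Tns a b') u - basis (Tns a' b') u) :: 'k)"
    by (intro tl0_null.add) (simp_all add: ltns_diff_left ltns_diff_right)
  then show ?thesis
    using wt by (simp add: tm_equiv_def tl0_eq_def)
qed

lemma tm_null_equiv: "a \<simeq> b \<Longrightarrow> tm_null F b \<Longrightarrow> tm_null F a"
  unfolding tm_equiv_def tm_null_def tl0_eq_def
  using tl0_null.add[of _ _ "\<lambda>u. basis a u - basis b u :: 'k" "basis b"] by auto

lemma tm_null_Cmp_left: "tm_null F a \<Longrightarrow> wt b \<Longrightarrow> src a = tgt b \<Longrightarrow> tm_null F (Cmp a b)"
  unfolding tm_null_def using tl0_null.comp_right[of "src a" "tgt a" _ b] by fastforce

lemma tm_null_Cmp_right: "tm_null F b \<Longrightarrow> wt a \<Longrightarrow> src a = tgt b \<Longrightarrow> tm_null F (Cmp a b)"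
  unfolding tm_null_def using tl0_null.comp_left[of "src b" "tgt b" _ a] by fastforce

lemma tm_null_Tns_left: "tm_null F a \<Longrightarrow> wt b \<Longrightarrow> tm_null F (Tns a b)"
  unfolding tm_null_def using tl0_null.tns_right[of "src a" "tgt a" _ b] by fastforce

lemma tm_null_Tns_right: "tm_null F b \<Longrightarrow> wt a \<Longrightarrow> tm_null F (Tns a b)"
  unfolding tm_null_def using tl0_null.tns_left[of "src b" "tgt b" _ a] by fastforce

lemma tm_equiv_ax: "ax_eq x y \<Longrightarrow> wt x \<Longrightarrow> wt y \<Longrightarrow> src x = src y \<Longrightarrow> tgt x = tgt y \<Longrightarrow> x \<simeq> y"
  unfolding tm_equiv_def tl0_eq_def by (auto intro: tl0_null.ax)

lemma Cmp_assoc: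
  "wt a \<Longrightarrow> wt b \<Longrightarrow> wt c \<Longrightarrow> src a = tgt b \<Longrightarrow> src b = tgt c \<Longrightarrow> Cmp (Cmp a b) c \<simeq> Cmp a (Cmp b c)"
  by (rule tm_equiv_ax) (auto intro: ax_eq.intros)

lemma Cmp_Idt_left: "wt a \<Longrightarrow> Cmp (Idt (tgt a)) a \<simeq> a"
  by (rule tm_equiv_ax) (auto intro: ax_eq.intros)

lemma Cmp_Idt_right: "wt a \<Longrightarrow> Cmp a (Idt (src a)) \<simeq> a"
  by (rule tm_equiv_ax) (auto intro: ax_eq.intros)

lemma Tns_assoc: "wt a \<Longrightarrow> wt b \<Longrightarrow> wt c \<Longrightarrow> Tns (Tns a b) c \<simeq> Tns a (Tns b c)"
  by (rule tm_equiv_ax) (auto intro: ax_eq.intros)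

lemma Tns_Idt0_right: "wt a \<Longrightarrow> Tns a (Idt 0) \<simeq> a"
  by (rule tm_equiv_ax) (auto intro: ax_eq.intros)

lemma Tns_Idt_Idt: "Tns (Idt m) (Idt n) \<simeq> Idt (m + n)"
  by (rule tm_equiv_ax) (auto intro: ax_eq.intros)

lemma interchange:
  "wt a \<Longrightarrow> wt b \<Longrightarrow> wt c \<Longrightarrow> wt d \<Longrightarrow> src a = tgt c \<Longrightarrow> src b = tgt d \<Longrightarrow>
    Cmp (Tns a b) (Tns c d) \<simeq> Tns (Cmp a c) (Cmp b d)"
  by (rule tm_equiv_ax) (auto intro: ax_eq.intros)

lemma circle_equiv: "Cmp Cap Cup \<simeq> Idt 0"
  using tl0_null.rel_circle by (simp add: tm_equiv_def tl0_eq_def circle_def)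

lemma tm_null_zigzag1: "tm_null F zigzag1"
  using tl0_null.rel_zigzag1 by (simp add: tm_null_def zigzag1_def)

lemma tm_null_zigzag2: "tm_null F zigzag2"
  using tl0_null.rel_zigzag2 by (simp add: tm_null_def zigzag2_def)

lemma Cmp_Idt_Idt: "Cmp (Idt n) (Idt n) \<simeq> Idt n"
  using Cmp_Idt_left[of "Idt n"] by simp

lemma Cmp_regroup:
  assumes "wt a" "wt b" "wt c" "wt d" "src a = tgt b" "src b = tgt c" "src c = tgt d"
  shows "Cmp (Cmp a b) (Cmp c d) \<simeq> Cmp a (Cmp (Cmp b c) d)"
proof -
  have "Cmp (Cmp a b) (Cmp c d) \<simeq> Cmp a (Cmp b (Cmp c d))"
    using assms by (intro Cmp_assoc) simp_all
  also have "\<dots> \<simeq> Cmp a (Cmp (Cmp b c) d)"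
    using assms by (intro tm_equiv_Cmp tm_equiv_refl tm_equiv_sym[OF Cmp_assoc]) simp_all
  finally show ?thesis .
qed

lemma tm_null_sandwich:
  assumes "tm_null F (Cmp b c)" "wt a" "wt d" "src a = tgt b" "src c = tgt d"
  shows "tm_null F (Cmp (Cmp a b) (Cmp c d))"
proof -
  have bc: "wt b" "wt c" "src b = tgt c"
    using assms(1) by (simp_all add: tm_null_def)
  have "tm_null F (Cmp a (Cmp (Cmp b c) d))"
    using assms bc by (intro tm_null_Cmp_right tm_null_Cmp_left[OF assms(1)]) simp_all
  then show ?thesis
    using assms bc by (intro tm_null_equiv[OF Cmp_regroup]) simp_all
qed

lemma Tns_factor_left: "wt a \<Longrightarrow> wt b \<Longrightarrow> Tns a b \<simeq> Cmp (Tns (Idt (tgt a)) b) (Tns a (Idt (src b)))"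
  by (rule tm_equiv_sym, rule tm_equiv_trans[OF interchange tm_equiv_Tns[OF Cmp_Idt_left Cmp_Idt_right]])
    simp_all

lemma Tns_factor_right: "wt a \<Longrightarrow> wt b \<Longrightarrow> Tns a b \<simeq> Cmp (Tns a (Idt (tgt b))) (Tns (Idt (src a)) b)"
  by (rule tm_equiv_sym, rule tm_equiv_trans[OF interchange tm_equiv_Tns[OF Cmp_Idt_right Cmp_Idt_left]])
    simp_all

lemma Tns_Idt_add_right: "wt a \<Longrightarrow> Tns a (Idt (m + n)) \<simeq> Tns (Tns a (Idt m)) (Idt n)"
  by (rule tm_equiv_trans[OF tm_equiv_Tns[OF tm_equiv_refl tm_equiv_sym[OF Tns_Idt_Idt]]
        tm_equiv_sym[OF Tns_assoc]]) simp_all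

lemma Tns_Idt_add_left: "wt a \<Longrightarrow> Tns (Idt m) (Tns (Idt n) a) \<simeq> Tns (Idt (m + n)) a"
  by (rule tm_equiv_trans[OF tm_equiv_sym[OF Tns_assoc] tm_equiv_Tns[OF Tns_Idt_Idt tm_equiv_refl]])
    simp_all

lemma tm_null_Cmp_Tns:
  assumes null: "tm_null F (Cmp (Tns x (Idt d)) (Tns y (Idt e)))"
    and "wt A" "wt B" "src A = d + s" "tgt B = e + s"
  shows "tm_null F (Cmp (Tns x A) (Tns y B))"
proof -
  have wt: "wt x" "wt y" "src x + d = tgt y + e"
    using null by (simp_all add: tm_null_def)
  have "Cmp (Tns x (Idt (d + s))) (Tns y (Idt (e + s)))
      \<simeq> Cmp (Tns (Tns x (Idt d)) (Idt s)) (Tns (Tns y (Idt e)) (Idt s))"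
    using wt by (intro tm_equiv_Cmp Tns_Idt_add_right) simp_all
  also have "\<dots> \<simeq> Tns (Cmp (Tns x (Idt d)) (Tns y (Idt e))) (Cmp (Idt s) (Idt s))"
    using wt by (intro interchange) simp_all
  finally have "tm_null F (Cmp (Tns x (Idt (d + s))) (Tns y (Idt (e + s))))"
    using tm_null_Tns_left[OF null] by (simp add: tm_null_equiv)
  then have middle: "tm_null F (Cmp (Tns x (Idt (src A))) (Tns y (Idt (tgt B))))"
    using assms by simp
  have "Cmp (Tns x A) (Tns y B)
      \<simeq> Cmp (Cmp (Tns (Idt (tgt x)) A) (Tns x (Idt (src A)))) (Cmp (Tns y (Idt (tgt B))) (Tns (Idt (src y)) B))"
    using assms wt by (intro tm_equiv_Cmp Tns_factor_left Tns_factor_right) simp_all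
  moreover have "tm_null F \<dots>"
    using assms wt by (intro tm_null_sandwich[OF middle]) simp_all
  ultimately show ?thesis
    by (rule tm_null_equiv)
qed

text \<open>c_from K n i is the part of c_{K,n} on the strands i, ..., n, and block K i k is its part on
  the k strands starting at i.\<close>

definition c_from :: "nat set \<Rightarrow> nat \<Rightarrow> nat \<Rightarrow> tm" where
  "c_from K n i = Cmp (cup_from K n i) (cap_from K n i)"

definition block :: "nat set \<Rightarrow> nat \<Rightarrow> nat \<Rightarrow> tm" where
  "block K i k = (if i \<in> K then Cmp Cup Cap else Cmp (Idt k) (Idt k))"

lemma block_types: "wt (block K i k)" "(i \<in> K \<Longrightarrow> k = 2) \<Longrightarrow> src (block K i k) = k"
  "(i \<in> K \<Longrightarrow> k = 2) \<Longrightarrow> tgt (block K i k) = k"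
  by (auto simp: block_def)

lemma c_from_split:
  assumes "i \<le> n" "i \<in> K \<Longrightarrow> k = 2" "i \<notin> K \<Longrightarrow> k = 1 \<or> k = 2 \<and> Suc i \<le> n \<and> Suc i \<notin> K"
  shows "c_from K n i \<simeq> Tns (block K i k) (c_from K n (i + k))"
proof -
  let ?cup = "if i \<in> K then Cup else Idt k" and ?cap = "if i \<in> K then Cap else Idt k"
  have "c_from K n i \<simeq> Cmp (Tns ?cup (cup_from K n (i + k))) (Tns ?cap (cap_from K n (i + k)))"
  proof (cases "i \<in> K")
    case True
    then show ?thesis
      using assms by (simp add: c_from_def cap_from_in cup_from_in tm_equiv_refl)
  next
    case False
    then consider "k = 1" | "k = 2" "Suc i \<le> n" "Suc i \<notin> K"
      using assms(3) by blast
    then show ?thesis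
    proof cases
      case 1
      then show ?thesis
        using False assms by (simp add: c_from_def cap_from_notin cup_from_notin tm_equiv_refl)
    next
      case 2
      then have "c_from K n i = Cmp (Tns (Idt 1) (Tns (Idt 1) (cup_from K n (i + 2))))
          (Tns (Idt 1) (Tns (Idt 1) (cap_from K n (i + 2))))"
        using False assms by (simp add: c_from_def cap_from_notin cup_from_notin)
      also have "\<dots> \<simeq> Cmp (Tns (Idt 2) (cup_from K n (i + 2))) (Tns (Idt 2) (cap_from K n (i + 2)))"
        by (intro tm_equiv_Cmp Tns_Idt_add_left[of _ 1 1, unfolded one_add_one]) simp_all
      finally show ?thesis
        using False 2 by simp
    qed
  qed
  also have "\<dots> \<simeq> Tns (block K i k) (c_from K n (i + k))"
    unfolding block_def c_from_def by (cases "i \<in> K") (simp_all add: interchange)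
  finally show ?thesis .
qed

lemma block_mult:
  assumes "i \<in> I \<union> J \<Longrightarrow> k = 2"
  shows "Cmp (block I i k) (block J i k) \<simeq> block (I \<union> J) i k"
proof -
  have cap_cap: "Cmp (Cmp Cup Cap) (Cmp Cup Cap) \<simeq> Cmp Cup Cap"
  proof -
    have "Cmp (Cmp Cup Cap) (Cmp Cup Cap) \<simeq> Cmp Cup (Cmp (Cmp Cap Cup) Cap)"
      by (rule Cmp_regroup) simp_all
    also have "\<dots> \<simeq> Cmp Cup (Cmp (Idt 0) Cap)"
      by (intro tm_equiv_Cmp tm_equiv_refl circle_equiv) simp_all
    also have "\<dots> \<simeq> Cmp Cup Cap"
      using Cmp_Idt_left[of Cap] by (intro tm_equiv_Cmp tm_equiv_refl) simp_all
    finally show ?thesis .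
  qed
  have cap_id: "Cmp (Cmp Cup Cap) (Cmp (Idt 2) (Idt 2)) \<simeq> Cmp Cup Cap"
    using tm_equiv_trans[OF tm_equiv_Cmp[OF tm_equiv_refl Cmp_Idt_Idt] Cmp_Idt_right[of "Cmp Cup Cap"]]
    by simp
  have id_cap: "Cmp (Cmp (Idt 2) (Idt 2)) (Cmp Cup Cap) \<simeq> Cmp Cup Cap"
    using tm_equiv_trans[OF tm_equiv_Cmp[OF Cmp_Idt_Idt tm_equiv_refl] Cmp_Idt_left[of "Cmp Cup Cap"]]
    by simp
  have id_id: "Cmp (Cmp (Idt k) (Idt k)) (Cmp (Idt k) (Idt k)) \<simeq> Cmp (Idt k) (Idt k)"
    by (intro tm_equiv_Cmp Cmp_Idt_Idt) simp
  show ?thesis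
    using assms cap_cap cap_id id_cap id_id by (auto simp: block_def)
qed

lemma Cmp_c_from_split:
  assumes "apt n I" "apt n J" "i \<le> n" "i \<in> I \<Longrightarrow> Suc i \<notin> J" "i \<in> J \<Longrightarrow> Suc i \<notin> I"
    and k: "k = (if i \<in> I \<union> J then 2 else 1)"
  shows "Cmp (c_from I n i) (c_from J n i)
    \<simeq> Tns (Cmp (block I i k) (block J i k)) (Cmp (c_from I n (i + k)) (c_from J n (i + k)))"
proof -
  have room: "Suc i \<le> n" if "i \<in> I \<union> J"
    using that apt_less assms(1,2) by (auto simp: Suc_le_eq)
  have "c_from I n i \<simeq> Tns (block I i k) (c_from I n (i + k))"
    by (rule c_from_split) (use assms room in auto)
  moreover have "c_from J n i \<simeq> Tns (block J i k) (c_from J n (i + k))"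
    by (rule c_from_split) (use assms room in auto)
  ultimately have "Cmp (c_from I n i) (c_from J n i)
      \<simeq> Cmp (Tns (block I i k) (c_from I n (i + k))) (Tns (block J i k) (c_from J n (i + k)))"
    using assms by (intro tm_equiv_Cmp) (simp_all add: c_from_def src_cap_from_apt)
  also have "\<dots> \<simeq> Tns (Cmp (block I i k) (block J i k)) (Cmp (c_from I n (i + k)) (c_from J n (i + k)))"
    using assms by (intro interchange)
      (simp_all add: block_types c_from_def src_cap_from_apt)
  finally show ?thesis .
qed

lemma cap_cup_conflict:
  assumes "apt n I" "apt n J" "i \<in> I" "Suc i \<in> J"
  shows "tm_null F (Cmp (cap_from I n i) (cup_from J n i))"
    and "tm_null F (Cmp (cap_from J n i) (cup_from I n i))"
proof -
  have le: "i + 2 \<le> n" "i \<notin> J"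
    using apt_less[OF assms(2,4)] apt_pred_notin[OF assms(2,4)] by simp_all
  have shifted_cup: "cup_from J n i \<simeq> Tns (Tns (Idt 1) Cup) (cup_from J n (i + 3))"
    using le assms(4) tm_equiv_sym[OF Tns_assoc, of "Idt 1" Cup "cup_from J n (i + 3)"]
    by (simp add: cup_from_notin cup_from_in numeral_eq_Suc)
  have shifted_cap: "cap_from J n i \<simeq> Tns (Tns (Idt 1) Cap) (cap_from J n (i + 3))"
    using le assms(4) tm_equiv_sym[OF Tns_assoc, of "Idt 1" Cap "cap_from J n (i + 3)"]
    by (simp add: cap_from_notin cap_from_in numeral_eq_Suc)
  have "Cmp (Tns Cap (Idt 1)) (Tns (Tns (Idt 1) Cup) (Idt 0)) \<simeq> zigzag2"
    unfolding zigzag2_def by (intro tm_equiv_Cmp tm_equiv_refl Tns_Idt0_right) simp_all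
  then have "tm_null F (Cmp (Tns Cap (Idt 1)) (Tns (Tns (Idt 1) Cup) (Idt 0)))"
    using tm_null_zigzag2 by (rule tm_null_equiv)
  then have "tm_null F (Cmp (Tns Cap (cap_from I n (i + 2))) (Tns (Tns (Idt 1) Cup) (cup_from J n (i + 3))))"
    by (rule tm_null_Cmp_Tns[where s = "n - (i + 2)"])
      (use le in \<open>simp_all add: src_cap_from_apt assms\<close>)
  then show "tm_null F (Cmp (cap_from I n i) (cup_from J n i))"
    using le assms(3) by (intro tm_null_equiv[OF tm_equiv_Cmp[OF tm_equiv_refl shifted_cup]])
      (simp_all add: cap_from_in src_cap_from_apt assms)
  have "Cmp (Tns (Tns (Idt 1) Cap) (Idt 0)) (Tns Cup (Idt 1)) \<simeq> zigzag1"
    unfolding zigzag1_def by (intro tm_equiv_Cmp tm_equiv_refl Tns_Idt0_right) simp_all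
  then have "tm_null F (Cmp (Tns (Tns (Idt 1) Cap) (Idt 0)) (Tns Cup (Idt 1)))"
    using tm_null_zigzag1 by (rule tm_null_equiv)
  then have "tm_null F (Cmp (Tns (Tns (Idt 1) Cap) (cap_from J n (i + 3))) (Tns Cup (cup_from I n (i + 2))))"
    by (rule tm_null_Cmp_Tns[where s = "n - (i + 2)"])
      (use le in \<open>simp_all add: src_cap_from_apt assms\<close>)
  then show "tm_null F (Cmp (cap_from J n i) (cup_from I n i))"
    using le assms(3) by (intro tm_null_equiv[OF tm_equiv_Cmp[OF shifted_cap tm_equiv_refl]])
      (simp_all add: cup_from_in src_cap_from_apt assms)
qed

text \<open>Caps of I and J at adjacent positions j and j + 1 would meet in a zig-zag.\<close>

definition compatible_from :: "nat set \<Rightarrow> nat set \<Rightarrow> nat \<Rightarrow> bool" where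
  "compatible_from I J i \<longleftrightarrow> (\<forall>j\<ge>i. (j \<in> I \<longrightarrow> Suc j \<notin> J) \<and> (j \<in> J \<longrightarrow> Suc j \<notin> I))"

lemma compatible_from_mono: "compatible_from I J i \<Longrightarrow> i \<le> i' \<Longrightarrow> compatible_from I J i'"
  unfolding compatible_from_def by auto

lemma c_from_mult_compatible:
  assumes "apt n I" "apt n J" "compatible_from I J i"
  shows "Cmp (c_from I n i) (c_from J n i) \<simeq> c_from (I \<union> J) n i"
  using assms(3)
proof (induction "Suc n - i" arbitrary: i rule: less_induct)
  case less
  show ?case
  proof (cases "n < i")
    case True
    then have "i \<notin> I \<union> J"
      using apt_less assms(1,2) by fastforce
    with True show ?thesis
      using block_mult[of i I J 0] by (simp add: c_from_def block_def cap_from_beyond cup_from_beyond)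
  next
    case False
    define k :: nat where "k = (if i \<in> I \<union> J then 2 else 1)"
    have "Cmp (c_from I n i) (c_from J n i)
        \<simeq> Tns (Cmp (block I i k) (block J i k)) (Cmp (c_from I n (i + k)) (c_from J n (i + k)))"
      using False less.prems assms k_def by (intro Cmp_c_from_split) (auto simp: compatible_from_def)
    also have "\<dots> \<simeq> Tns (block (I \<union> J) i k) (c_from (I \<union> J) n (i + k))"
    proof (rule tm_equiv_Tns)
      show "Cmp (block I i k) (block J i k) \<simeq> block (I \<union> J) i k"
        by (rule block_mult) (simp add: k_def)
      show "Cmp (c_from I n (i + k)) (c_from J n (i + k)) \<simeq> c_from (I \<union> J) n (i + k)"
        using False k_def compatible_from_mono[OF less.prems] by (intro less.hyps) auto
    qed
    also have "\<dots> \<simeq> c_from (I \<union> J) n i"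
      by (rule tm_equiv_sym, rule c_from_split) (use False k_def in auto)
    finally show ?thesis .
  qed
qed

lemma c_from_mult_conflict:
  assumes "apt n I" "apt n J" "\<not> compatible_from I J i"
  shows "tm_null F (Cmp (c_from I n i) (c_from J n i))"
  using assms(3)
proof (induction "Suc n - i" arbitrary: i rule: less_induct)
  case less
  have "i \<le> n"
    using less.prems apt_less[OF assms(1)] apt_less[OF assms(2)] unfolding compatible_from_def by force
  consider "i \<in> I" "Suc i \<in> J" | "i \<in> J" "Suc i \<in> I" | "i \<in> I \<longrightarrow> Suc i \<notin> J" "i \<in> J \<longrightarrow> Suc i \<notin> I"
    by blast
  then show ?case
  proof cases
    case 1
    then show ?thesis
      using cap_cup_conflict(1)[OF assms(1,2) 1] unfolding c_from_def
      by (intro tm_null_sandwich) (simp_all add: src_cap_from_apt assms)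
  next
    case 2
    then show ?thesis
      using cap_cup_conflict(2)[OF assms(2,1) 2] unfolding c_from_def
      by (intro tm_null_sandwich) (simp_all add: src_cap_from_apt assms)
  next
    case 3
    define k :: nat where "k = (if i \<in> I \<union> J then 2 else 1)"
    have "Suc i \<notin> I \<union> J" if "k = 2"
      using that 3 apt_Suc_notin[OF assms(1)] apt_Suc_notin[OF assms(2)] k_def
      by (auto split: if_splits)
    have "\<not> compatible_from I J (i + k)"
    proof
      assume compatible: "compatible_from I J (i + k)"
      obtain j where j: "i \<le> j" "j \<in> I \<and> Suc j \<in> J \<or> j \<in> J \<and> Suc j \<in> I"
        using less.prems unfolding compatible_from_def by blast
      then have "i + k \<le> j"
        using 3 \<open>k = 2 \<Longrightarrow> Suc i \<notin> I \<union> J\<close> k_def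
        by (cases "j = i \<or> j = Suc i") (auto split: if_splits)
      with j compatible show False
        unfolding compatible_from_def by blast
    qed
    then have "tm_null F (Cmp (c_from I n (i + k)) (c_from J n (i + k)))"
      using \<open>i \<le> n\<close> k_def by (intro less.hyps) auto
    then have "tm_null F (Tns (Cmp (block I i k) (block J i k)) (Cmp (c_from I n (i + k)) (c_from J n (i + k))))"
      by (rule tm_null_Tns_right) (simp add: block_types k_def)
    moreover have "Cmp (c_from I n i) (c_from J n i)
        \<simeq> Tns (Cmp (block I i k) (block J i k)) (Cmp (c_from I n (i + k)) (c_from J n (i + k)))"
      using \<open>i \<le> n\<close> 3 assms k_def by (intro Cmp_c_from_split) auto
    ultimately show ?thesis
      by (rule tm_null_equiv[rotated])
  qed
qed

lemma apt_Un_iff_compatible: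
  assumes "apt n I" "apt n J"
  shows "apt n (I \<union> J) \<longleftrightarrow> compatible_from I J 1"
  using assms unfolding apt_iff compatible_from_def by (auto simp: subset_iff)

lemma c_I_eq_c_from: "c_I K n = c_from K n 1"
  by (simp add: c_I_def cup_I_def cap_I_def c_from_def)

lemma c_I_mult:
  assumes "apt n I" "apt n J"
  shows "tl0_eq n n (basis (Cmp (c_I I n) (c_I J n)) :: tm \<Rightarrow> 'k)
    (\<lambda>u. if apt n (I \<union> J) then basis (c_I (I \<union> J) n) u else 0)"
proof (cases "apt n (I \<union> J)")
  case True
  then have "Cmp (c_from I n 1) (c_from J n 1) \<simeq> c_from (I \<union> J) n 1"
    using assms by (intro c_from_mult_compatible) (simp_all add: apt_Un_iff_compatible)
  with True show ?thesis
    by (simp add: tm_equiv_def c_I_eq_c_from c_from_def src_cap_from_apt assms)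
next
  case False
  then have "tm_null F (Cmp (c_from I n 1) (c_from J n 1))"
    using assms by (intro c_from_mult_conflict) (simp_all add: apt_Un_iff_compatible)
  with False show ?thesis
    by (simp add: tm_null_def tl0_eq_def c_I_eq_c_from c_from_def src_cap_from_apt assms)
qed

end

lemma sum_toggle_sign_eq_0:
  fixes g :: "'a set \<Rightarrow> 'b::comm_ring_1"
  assumes "finite A" "\<And>J. J \<in> A \<Longrightarrow> finite J"
    and "\<And>J. J \<in> A \<Longrightarrow> insert x J \<in> A" "\<And>J. J \<in> A \<Longrightarrow> J - {x} \<in> A"
    and "\<And>J. g (insert x J) = g J"
  shows "(\<Sum>J\<in>A. (-1) ^ card J * g J) = 0"
proof -
  let ?f = "\<lambda>J. (-1) ^ card J * g J"
  have "sum ?f A = sum ?f (A \<inter> {J. x \<in> J}) + sum ?f (A - {J. x \<in> J})"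
    using assms(1) by (rule sum.Int_Diff)
  also have "sum ?f (A \<inter> {J. x \<in> J}) = sum (\<lambda>J. ?f (insert x J)) (A - {J. x \<in> J})"
    using assms(3,4)
    by (intro sum.reindex_bij_witness[where i = "insert x" and j = "\<lambda>J. J - {x}"]) (auto simp: insert_absorb)
  also have "\<dots> = sum (\<lambda>J. - ?f J) (A - {J. x \<in> J})"
    using assms(2,5) by (intro sum.cong) auto
  finally show ?thesis
    by (simp add: sum_negf)
qed

lemma apt_sign_convolution:
  fixes h :: "nat set \<Rightarrow> 'a::comm_ring_1"
  shows "(\<Sum>I | apt n I. (-1) ^ card I * (\<Sum>J | apt n J. (-1) ^ card J * (if apt n (I \<union> J) then h (I \<union> J) else 0)))
    = (\<Sum>J | apt n J. (-1) ^ card J * h J)"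
proof -
  have inner: "(\<Sum>J | apt n J. (-1) ^ card J * (if apt n (I \<union> J) then h (I \<union> J) else 0)) = 0"
    if "x \<in> I" for I x
  proof -
    have "(\<Sum>J | apt n J. (-1) ^ card J * (if apt n (I \<union> J) then h (I \<union> J) else 0))
        = (\<Sum>J | apt n (I \<union> J). (-1) ^ card J * h (I \<union> J))"
      using finite_apt by (intro sum.mono_neutral_cong_right) (auto intro: apt_subset)
    also have "\<dots> = 0"
      using finite_subset[OF _ finite_apt, of "{J. apt n (I \<union> J)}"] that
      by (intro sum_toggle_sign_eq_0) (auto intro: apt_subset apt_finite simp: insert_absorb)
    finally show ?thesis .
  qed
  have "(\<Sum>I | apt n I. (-1) ^ card I * (\<Sum>J | apt n J. (-1) ^ card J * (if apt n (I \<union> J) then h (I \<union> J) else 0)))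
      = (\<Sum>I | apt n I. if I = {} then (\<Sum>J | apt n J. (-1) ^ card J * h J) else 0)"
    using inner by (intro sum.cong) auto
  also have "\<dots> = (\<Sum>J | apt n J. (-1) ^ card J * h J)"
    using finite_apt[of n] apt_empty by simp
  finally show ?thesis .
qed

theorem mainTheorem1:
  fixes n :: nat
  shows "tl0_eq n n (lcomp (jw n :: tm \<Rightarrow> 'k::field) (jw n)) (jw n)"
proof -
  let ?A = "{I. apt n I}" and ?s = "\<lambda>I. (-1 :: 'k) ^ card I"
  have "lcomp (jw n) (jw n) = (\<lambda>u. \<Sum>I\<in>?A. ?s I * (\<Sum>J\<in>?A. ?s J * basis (Cmp (c_I I n) (c_I J n)) u))"
    unfolding jw_def by (rule lcomp_sum_basis)
  moreover have "tl0_eq n n (\<lambda>u. \<Sum>I\<in>?A. ?s I * (\<Sum>J\<in>?A. ?s J * basis (Cmp (c_I I n) (c_I J n)) u))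
      (\<lambda>u. \<Sum>I\<in>?A. ?s I * (\<Sum>J\<in>?A. ?s J * (if apt n (I \<union> J) then basis (c_I (I \<union> J) n) u else 0)))"
    by (intro tl0_eq_sum finite_apt c_I_mult) auto
  moreover have "(\<lambda>u. \<Sum>I\<in>?A. ?s I * (\<Sum>J\<in>?A. ?s J * (if apt n (I \<union> J) then basis (c_I (I \<union> J) n) u else 0)))
      = jw n"
    unfolding jw_def by (rule ext) (rule apt_sign_convolution)
  ultimately show ?thesis
    by simp
qed

end
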